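(* Let $C>0$ and $Q\in\mathbb{N}$. There is a constant $C'>0$ depending only on $C$ and $Q$ such that for every image $I$ of width $w\geqslant2$ and every strip pattern set $\mathcal{L}$ of width $C$ and density $Q$ on $I$, $r(\mathcal{L})\leqslant C'w$.
   Context: Image: an image of width $w\geqslant2$ and height $h\geqslant1$ is a set of pixels identified with the integer points $(x,y)$, $x\in\{0,\dots,w-1\}$, $y\in\{0,\dots,h-1\}$. A pattern is a nonempty subset of the image; a pattern set is a nonempty set of distinct patterns. For a pattern set $\mathcal{T}$, $S(\mathcal{T})=|\mathcal{T}|\cdot|\bigcap_{T\in\mathcal{T}}T|$ and $r(\mathcal{T})=\max_{\varnothing\neq\mathcal{R}\subseteq\mathcal{T}}S(\mathcal{R})$. Strips: for a line $l$ and $C>0$, $s(l,C)=\{r\in\mathbb{R}^2\mid\rho(r,l)\leqslant C/2\}$, $\rho$ Euclidean distance. A line is mostly horizontal inclined to the right if it has equation $y=ax+b$ with $0\leqslant a\leqslant1$; it is integer at the image of width $w$ if $a=\frac{e}{w-1}$ for some $e\in\{0,\dots,w-1\}$. Patterns $T\in\mathcal{M}$ are $C$-parallel if there exist integer lines $l(T)$, $T\in\mathcal{M}$, all of the same slope, with $T\subset s(l(T),C)$ for all $T$. A pattern set $\mathcal{L}$ is a strip pattern set of width $C$ and density $Q$ if (1) every $L\in\mathcal{L}$ satisfies $L\subset s(l,C)$ for some integer line $l$, and (2) every $C$-parallel $\mathcal{M}\subseteq\mathcal{L}$ with $\bigcap_{L\in\mathcal{M}}L\neq\varnothing$ has $|\mathcal{M}|\leqslant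 Q$. *)

theory Defs
  imports "HOL-Analysis.Analysis"
begin

definition image :: "nat \<Rightarrow> nat \<Rightarrow> (int \<times> int) set" where
  "image w h = {(x, y). 0 \<le> x \<and> x < int w \<and> 0 \<le> y \<and> y < int h}"

definition pattern_set :: "nat \<Rightarrow> nat \<Rightarrow> (int \<times> int) set set \<Rightarrow> bool" where
  "pattern_set w h \<T> \<longleftrightarrow> \<T> \<noteq> {} \<and> (\<forall>T\<in>\<T>. T \<noteq> {} \<and> T \<subseteq> image w h)"

definition S_val :: "(int \<times> int) set set \<Rightarrow> nat" where
  "S_val \<T> = card \<T> * card (\<Inter>\<T>)"

definition r_val :: "(int \<times> int) set set \<Rightarrow> nat" where
  "r_val \<T> = Max {S_val \<R> | \<R>. \<R> \<noteq> {} \<and> \<R> \<subseteq> \<T>}"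

text \<open>The line y = a x + b in the plane, and the closed strip of width C around it
  (Euclidean distance; the product metric on real \<times> real is Euclidean).\<close>
definition line :: "real \<Rightarrow> real \<Rightarrow> (real \<times> real) set" where
  "line a b = {(x, a * x + b) | x. True}"

definition strip :: "real \<Rightarrow> real \<Rightarrow> real \<Rightarrow> (real \<times> real) set" where
  "strip a b C = {p. infdist p (line a b) \<le> C / 2}"

definition in_strip :: "(int \<times> int) set \<Rightarrow> real \<Rightarrow> real \<Rightarrow> real \<Rightarrow> bool" where
  "in_strip T a b C \<longleftrightarrow> (\<forall>(x, y)\<in>T. (real_of_int x, real_of_int y) \<in> strip a b C)"

text \<open>Slope of a mostly horizontal line inclined to the right which is integer at width w.\<close>
definition integer_slope :: "nat \<Rightarrow> real \<Rightarrow> bool" where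
  "integer_slope w a \<longleftrightarrow> (\<exists>e\<in>{0..w-1}. a = real e / (real w - 1))"

definition C_parallel :: "nat \<Rightarrow> real \<Rightarrow> (int \<times> int) set set \<Rightarrow> bool" where
  "C_parallel w C \<M> \<longleftrightarrow> (\<exists>a. integer_slope w a \<and> (\<forall>T\<in>\<M>. \<exists>b. in_strip T a b C))"

definition strip_pattern_set ::
  "nat \<Rightarrow> nat \<Rightarrow> real \<Rightarrow> nat \<Rightarrow> (int \<times> int) set set \<Rightarrow> bool" where
  "strip_pattern_set w h C Q \<L> \<longleftrightarrow>
     pattern_set w h \<L> \<and>
     (\<forall>L\<in>\<L>. \<exists>a b. integer_slope w a \<and> in_strip L a b C) \<and>
     (\<forall>\<M>. \<M> \<subseteq> \<L> \<and> C_parallel w C \<M> \<and> \<Inter>\<M> \<noteq> {} \<longrightarrow> card \<M> \<le> Q)"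

end

theory Submission
  imports Defs
begin

text \<open>Take a subset \<open>\<R>\<close> of the pattern set whose members share a pixel, and give each member
  the slope index \<open>e \<in> {0..w-1}\<close> of a strip containing it. Members of equal slope form a
  \<open>C\<close>-parallel family with a common pixel, so \<open>|\<R>| \<le> Q k\<close>, where \<open>k\<close> is the number of
  distinct slopes. Since slopes lie in \<open>[0, 1]\<close>, each strip meets the image inside a vertical
  band of half-height \<open>C\<close>, so the common part of \<open>\<R>\<close> has at most \<open>w (2C + 1)\<close> pixels. If
  \<open>k \<ge> 2\<close>, the two extreme slopes differ by at least \<open>(k - 1)/(w - 1)\<close>, and two bands whose
  slopes differ by \<open>d\<close> meet only above an \<open>x\<close>-interval of length \<open>4C/d\<close>. Either way
  \<open>k |\<Inter>\<R>| \<le> (8C + 1)(2C + 1) w\<close>, hence \<open>S(\<R>) \<le> Q (8C + 1)(2C + 1) w\<close>.\<close>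

lemma vertical_offset_le_if_in_strip:
  assumes "\<bar>a\<bar> \<le> 1" and "(x, y) \<in> strip a b C"
  shows "\<bar>y - a * x - b\<bar> \<le> C"
proof -
  have ne: "line a b \<noteq> {}" unfolding line_def by auto
  have "\<bar>y - a * x - b\<bar> / 2 \<le> dist (x, y) q" if q_line: "q \<in> line a b" for q
  proof -
    obtain t where q: "q = (t, a * t + b)" using q_line unfolding line_def by auto
    define u where "u = x - t"
    define v where "v = y - a * t - b"
    have "dist (x, y) q = sqrt (u\<^sup>2 + v\<^sup>2)" unfolding q u_def v_def dist_Pair_Pair dist_real_def
      by (simp add: power2_abs algebra_simps)
    moreover have "\<bar>u\<bar> \<le> sqrt (u\<^sup>2 + v\<^sup>2)" "\<bar>v\<bar> \<le> sqrt (u\<^sup>2 + v\<^sup>2)"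
      using real_sqrt_sum_squares_ge1[of "\<bar>u\<bar>" v] real_sqrt_sum_squares_ge2[of u "\<bar>v\<bar>"]
      by (simp_all add: power2_abs)
    moreover have "\<bar>a * u\<bar> \<le> \<bar>u\<bar>" using assms(1) by (simp add: abs_mult mult_left_le_one_le)
    moreover have "\<bar>v - a * u\<bar> \<le> \<bar>v\<bar> + \<bar>a * u\<bar>" by (rule abs_triangle_ineq4)
    moreover have "\<bar>y - a * x - b\<bar> = \<bar>v - a * u\<bar>" unfolding u_def v_def by (simp add: algebra_simps)
    ultimately show ?thesis by linarith
  qed
  hence "\<bar>y - a * x - b\<bar> / 2 \<le> infdist (x, y) (line a b)"
    unfolding infdist_notempty[OF ne] by (intro cINF_greatest[OF ne])
  moreover have "infdist (x, y) (line a b) \<le> C / 2" using assms(2) unfolding strip_def by simp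
  ultimately show ?thesis by simp
qed

lemma card_ints_between_le:
  fixes lo hi :: real
  assumes "lo \<le> hi"
  shows "real (card {y::int. lo \<le> y \<and> y \<le> hi}) \<le> hi - lo + 1"
proof -
  have "{y::int. lo \<le> y \<and> y \<le> hi} = {\<lceil>lo\<rceil>..\<lfloor>hi\<rfloor>}"
    by (auto simp: ceiling_le_iff le_floor_iff)
  moreover have "real (nat (\<lfloor>hi\<rfloor> + 1 - \<lceil>lo\<rceil>)) \<le> hi - lo + 1"
    using of_int_floor_le[of hi] le_of_int_ceiling[of lo] assms by linarith
  ultimately show ?thesis by simp
qed

lemma card_lattice_band_le:
  fixes P :: "(int \<times> int) set" and X :: "int set" and f :: "int \<Rightarrow> real"
  assumes "finite X" and "D \<ge> 0"
    and "\<And>x y. (x, y) \<in> P \<Longrightarrow> x \<in> X \<and> \<bar>y - f x\<bar> \<le> D"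
  shows "real (card P) \<le> real (card X) * (2 * D + 1)"
proof -
  define B where "B x = {y::int. f x - D \<le> y \<and> y \<le> f x + D}" for x
  have B: "real (card (B x)) \<le> 2 * D + 1" for x
    using card_ints_between_le[of "f x - D" "f x + D"] assms(2) unfolding B_def by auto
  have finB: "finite (B x)" for x unfolding B_def by (auto simp: ceiling_le_iff le_floor_iff
      intro: finite_subset[of _ "{\<lceil>f x - D\<rceil>..\<lfloor>f x + D\<rfloor>}"])
  have "P \<subseteq> Sigma X B" using assms(3) unfolding B_def by (force simp: abs_le_iff)
  moreover have "finite (Sigma X B)" using assms(1) finB by simp
  ultimately have "real (card P) \<le> real (card (Sigma X B))" by (simp add: card_mono)
  also have "\<dots> = (\<Sum>x\<in>X. real (card (B x)))" using assms(1) finB by simp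
  also have "\<dots> \<le> real (card X) * (2 * D + 1)" using sum_mono[of X _ "\<lambda>_. 2 * D + 1"] B by simp
  finally show ?thesis .
qed

lemma card_band_le:
  fixes P :: "(int \<times> int) set" and a b C :: real
  assumes "C \<ge> 0" and "\<And>x y. (x, y) \<in> P \<Longrightarrow> 0 \<le> x \<and> x < int w \<and> \<bar>y - a * x - b\<bar> \<le> C"
  shows "real (card P) \<le> real w * (2 * C + 1)"
  using card_lattice_band_le[of "{0..<int w}" C P "\<lambda>x. a * x + b"] assms
  by (simp add: algebra_simps)

lemma card_two_bands_le:
  fixes P :: "(int \<times> int) set"
  assumes "a1 < a2" and "C \<ge> 0"
    and "\<And>x y. (x, y) \<in> P \<Longrightarrow> \<bar>y - a1 * x - b1\<bar> \<le> C \<and> \<bar>y - a2 * x - b2\<bar> \<le> C"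
  shows "real (card P) \<le> (4 * C / (a2 - a1) + 1) * (2 * C + 1)"
proof -
  define d where "d = a2 - a1"
  have d: "d > 0" using assms(1) unfolding d_def by simp
  define lo where "lo = (b1 - b2 - 2 * C) / d"
  define hi where "hi = (b1 - b2 + 2 * C) / d"
  let ?X = "{x::int. lo \<le> x \<and> x \<le> hi}"
  have "lo \<le> hi" unfolding lo_def hi_def using d assms(2) by (simp add: divide_right_mono)
  hence "real (card ?X) \<le> 4 * C / d + 1"
    using card_ints_between_le[of lo hi] unfolding lo_def hi_def by (simp add: diff_divide_distrib[symmetric])
  hence "real (card ?X) * (2 * C + 1) \<le> (4 * C / d + 1) * (2 * C + 1)"
    using assms(2) by (intro mult_right_mono) auto
  moreover have "real (card P) \<le> real (card ?X) * (2 * C + 1)"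
  proof (rule card_lattice_band_le[where f = "\<lambda>x. a1 * x + b1"])
    fix x y assume xy: "(x, y) \<in> P"
    hence "\<bar>d * x + b2 - b1\<bar> \<le> 2 * C" using assms(3)[OF xy] unfolding d_def
      by (simp add: algebra_simps abs_le_iff)
    hence "lo \<le> x \<and> x \<le> hi" unfolding lo_def hi_def using d
      by (simp add: pos_divide_le_eq pos_le_divide_eq mult.commute abs_le_iff)
    thus "x \<in> ?X \<and> \<bar>y - (a1 * x + b1)\<bar> \<le> C" using assms(3)[OF xy] by (simp add: algebra_simps)
  qed (use assms(2) in \<open>auto intro: finite_subset[of _ "{\<lceil>lo\<rceil>..\<lfloor>hi\<rfloor>}"] simp: ceiling_le_iff le_floor_iff\<close>)
  ultimately show ?thesis unfolding d_def by linarith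
qed

lemma slope_spread_estimate:
  fixes C g :: real and k w :: nat
  assumes "C \<ge> 0" and "2 \<le> k" and "k \<le> w" and "real k - 1 \<le> g"
  shows "(4 * C * (real w - 1) / g + 1) * real k \<le> (8 * C + 1) * real w"
proof -
  have k: "real k - 1 > 0" using assms(2) by simp
  have w: "real w - 1 \<ge> 0" using assms(2,3) by simp
  have "4 * C * (real w - 1) / g \<le> 4 * C * (real w - 1) / (real k - 1)"
    using assms(1,4) k w by (intro divide_left_mono) auto
  hence "(4 * C * (real w - 1) / g + 1) * real k
      \<le> (4 * C * (real w - 1) / (real k - 1) + 1) * real k"
    by (simp add: mult_right_mono)
  also have "\<dots> = 4 * C * (real w - 1) * (real k / (real k - 1)) + real k"
    using k by (simp add: field_simps)
  also have "\<dots> \<le> 4 * C * (real w - 1) * 2 + real w"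
    using k assms by (intro add_mono mult_left_mono) (auto simp: divide_le_eq)
  also have "\<dots> \<le> (8 * C + 1) * real w" using assms(1) by (simp add: algebra_simps)
  finally show ?thesis .
qed

lemma card_le_mult_card_image:
  assumes "finite A" and "\<And>y. y \<in> f ` A \<Longrightarrow> card {x\<in>A. f x = y} \<le> Q"
  shows "card A \<le> Q * card (f ` A)"
proof -
  have "A = (\<Union>y\<in>f ` A. {x\<in>A. f x = y})" by auto
  hence "card A \<le> (\<Sum>y\<in>f ` A. card {x\<in>A. f x = y})"
    using card_UN_le[of "f ` A" "\<lambda>y. {x\<in>A. f x = y}"] assms(1) by simp
  also have "\<dots> \<le> card (f ` A) * Q"
    using sum_bounded_above[of "f ` A" "\<lambda>y. card {x\<in>A. f x = y}" Q] assms(2) by simp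
  finally show ?thesis by (simp add: mult.commute)
qed

lemma card_Inter_mult_card_slopes_le:
  fixes \<R> :: "(int \<times> int) set set" and e :: "(int \<times> int) set \<Rightarrow> nat"
    and b :: "(int \<times> int) set \<Rightarrow> real"
  assumes "finite \<R>" and "\<R> \<noteq> {}" and "C \<ge> 0" and "w \<ge> 2"
    and e_le: "\<And>T. T \<in> \<R> \<Longrightarrow> e T \<le> w - 1"
    and band: "\<And>T x y. T \<in> \<R> \<Longrightarrow> (x, y) \<in> T \<Longrightarrow>
      0 \<le> x \<and> x < int w \<and> \<bar>y - real (e T) / (real w - 1) * x - b T\<bar> \<le> C"
  shows "real (card (\<Inter>\<R>)) * real (card (e ` \<R>)) \<le> (8 * C + 1) * (2 * C + 1) * real w"
proof -
  define k where "k = card (e ` \<R>)"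
  have "e ` \<R> \<subseteq> {..w - 1}" using e_le by auto
  hence "k \<le> w" unfolding k_def using card_mono[of "{..w - 1}" "e ` \<R>"] assms(4) by simp
  have I_band: "0 \<le> x \<and> x < int w \<and> \<bar>y - real (e T) / (real w - 1) * x - b T\<bar> \<le> C"
    if "T \<in> \<R>" "(x, y) \<in> \<Inter>\<R>" for T x y using band that by blast
  consider "k \<le> 1" | "2 \<le> k" by linarith
  then show ?thesis
  proof cases
    case 1
    obtain T where T: "T \<in> \<R>" using assms(2) by blast
    have "real (card (\<Inter>\<R>)) * real k \<le> real (card (\<Inter>\<R>))"
      using 1 by (simp add: mult_left_le)
    also have "\<dots> \<le> real w * (2 * C + 1)"
      by (rule card_band_le[OF assms(3)]) (rule I_band[OF T])
    also have "\<dots> \<le> (8 * C + 1) * (2 * C + 1) * real w"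
      using assms(3) by (simp add: algebra_simps)
    finally show ?thesis unfolding k_def .
  next
    case 2
    define e1 where "e1 = Min (e ` \<R>)"
    define e2 where "e2 = Max (e ` \<R>)"
    have "e1 \<in> e ` \<R>" "e2 \<in> e ` \<R>"
      unfolding e1_def e2_def using assms(1,2) by (auto intro: Min_in Max_in)
    then obtain T1 T2 where T: "T1 \<in> \<R>" "T2 \<in> \<R>" "e T1 = e1" "e T2 = e2" by blast
    have "e ` \<R> \<subseteq> {e1..e2}" using assms(1) unfolding e1_def e2_def by auto
    hence "k \<le> e2 + 1 - e1" unfolding k_def using card_mono[of "{e1..e2}" "e ` \<R>"] by simp
    hence gap: "real k - 1 \<le> real e2 - real e1" using 2 by linarith
    define s1 where "s1 = real e1 / (real w - 1)"
    define s2 where "s2 = real e2 / (real w - 1)"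
    have w1: "real w - 1 > 0" using assms(4) by simp
    have ds: "s2 - s1 = (real e2 - real e1) / (real w - 1)"
      unfolding s1_def s2_def by (simp add: diff_divide_distrib)
    moreover have "0 < (real e2 - real e1) / (real w - 1)"
      using gap 2 w1 by (intro divide_pos_pos) auto
    ultimately have "s1 < s2" by simp
    hence "real (card (\<Inter>\<R>)) \<le> (4 * C / (s2 - s1) + 1) * (2 * C + 1)"
      by (rule card_two_bands_le[of s1 s2 C _ "b T1" "b T2"])
        (use assms(3) I_band[OF T(1)] I_band[OF T(2)] T(3,4) in \<open>auto simp: s1_def s2_def\<close>)
    also have "\<dots> = (4 * C * (real w - 1) / (real e2 - real e1) + 1) * (2 * C + 1)"
      unfolding ds by simp
    finally have "real (card (\<Inter>\<R>)) * real k
        \<le> (4 * C * (real w - 1) / (real e2 - real e1) + 1) * (2 * C + 1) * real k"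
      by (rule mult_right_mono) simp
    also have "\<dots> = (4 * C * (real w - 1) / (real e2 - real e1) + 1) * real k * (2 * C + 1)"
      by (simp only: ac_simps)
    also have "\<dots> \<le> (8 * C + 1) * real w * (2 * C + 1)"
      using slope_spread_estimate[OF assms(3) 2 \<open>k \<le> w\<close> gap] assms(3) by (intro mult_right_mono) auto
    finally show ?thesis unfolding k_def by (simp add: algebra_simps)
  qed
qed

lemma finite_pixel_image: "finite (image w h)"
proof -
  have "image w h = {0..<int w} \<times> {0..<int h}" unfolding image_def by auto
  thus ?thesis by simp
qed

lemma finite_pattern_set:
  assumes "pattern_set w h \<T>"
  shows "finite \<T>"
proof -
  have "\<T> \<subseteq> Pow (image w h)" using assms unfolding pattern_set_def by auto
  thus ?thesis using finite_pixel_image finite_Pow_iff finite_subset by metis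
qed

lemma r_val_attained:
  assumes "finite \<T>" and "\<T> \<noteq> {}"
  obtains \<R> where "\<R> \<noteq> {}" and "\<R> \<subseteq> \<T>" and "r_val \<T> = S_val \<R>"
proof -
  let ?A = "{S_val \<R> | \<R>. \<R> \<noteq> {} \<and> \<R> \<subseteq> \<T>}"
  have "?A \<subseteq> S_val ` Pow \<T>" by auto
  hence "finite ?A" using assms(1) finite_subset by blast
  moreover have "?A \<noteq> {}" using assms(2) by auto
  ultimately have "Max ?A \<in> ?A" by (rule Max_in)
  thus ?thesis using that unfolding r_val_def by auto
qed

lemma strip_pattern_set_slopes:
  assumes "strip_pattern_set w h C Q \<L>"
  obtains e :: "(int \<times> int) set \<Rightarrow> nat" and b :: "(int \<times> int) set \<Rightarrow> real"
  where "\<And>L. L \<in> \<L> \<Longrightarrow> e L \<le> w - 1"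
    and "\<And>L. L \<in> \<L> \<Longrightarrow> in_strip L (real (e L) / (real w - 1)) (b L) C"
proof -
  have "\<forall>L\<in>\<L>. \<exists>p. fst p \<le> w - 1 \<and> in_strip L (real (fst p) / (real w - 1)) (snd p) C"
    using assms unfolding strip_pattern_set_def integer_slope_def by fastforce
  then obtain p where "\<forall>L\<in>\<L>. fst (p L) \<le> w - 1 \<and> in_strip L (real (fst (p L)) / (real w - 1)) (snd (p L)) C"
    by (metis bchoice)
  thus ?thesis using that[of "\<lambda>L. fst (p L)" "\<lambda>L. snd (p L)"] by blast
qed

lemma card_le_density_mult_card_slopes:
  assumes sp: "strip_pattern_set w h C Q \<L>" and "\<R> \<subseteq> \<L>" and "\<Inter>\<R> \<noteq> {}"
    and e_le: "\<And>L. L \<in> \<L> \<Longrightarrow> e L \<le> w - 1"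
    and strip: "\<And>L. L \<in> \<L> \<Longrightarrow> in_strip L (real (e L) / (real w - 1)) (b L) C"
  shows "card \<R> \<le> Q * card (e ` \<R>)"
proof (rule card_le_mult_card_image)
  show "finite \<R>"
    using finite_pattern_set sp assms(2) finite_subset unfolding strip_pattern_set_def by metis
  fix s assume "s \<in> e ` \<R>"
  then obtain T where T: "T \<in> \<R>" "e T = s" by blast
  let ?\<M> = "{L\<in>\<R>. e L = s}"
  have "s \<le> w - 1" using e_le[of T] T assms(2) by blast
  hence "integer_slope w (real s / (real w - 1))" unfolding integer_slope_def by auto
  moreover have "\<exists>b'. in_strip L (real s / (real w - 1)) b' C" if "L \<in> ?\<M>" for L
    using strip[of L] that assms(2) by auto
  ultimately have "C_parallel w C ?\<M>" unfolding C_parallel_def by blast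
  moreover have "?\<M> \<subseteq> \<L>" and "\<Inter>?\<M> \<noteq> {}" using assms(2,3) by auto
  ultimately show "card ?\<M> \<le> Q" using sp unfolding strip_pattern_set_def by simp
qed

lemma S_val_le_strip_pattern_set:
  assumes "C > 0" and "w \<ge> 2" and sp: "strip_pattern_set w h C Q \<L>" and "\<R> \<subseteq> \<L>"
  shows "real (S_val \<R>) \<le> real Q * (8 * C + 1) * (2 * C + 1) * real w"
proof (cases "\<R> = {} \<or> \<Inter>\<R> = {}")
  case True
  hence "S_val \<R> = 0" unfolding S_val_def by auto
  thus ?thesis using assms(1) by simp
next
  case False
  obtain e b where e_le: "\<And>L. L \<in> \<L> \<Longrightarrow> e L \<le> w - 1"
    and strip: "\<And>L. L \<in> \<L> \<Longrightarrow> in_strip L (real (e L) / (real w - 1)) (b L) C"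
    using strip_pattern_set_slopes[OF sp] by blast
  have band: "0 \<le> x \<and> x < int w \<and> \<bar>y - real (e L) / (real w - 1) * x - b L\<bar> \<le> C"
    if "L \<in> \<R>" "(x, y) \<in> L" for L x y
  proof -
    have "L \<in> \<L>" using that(1) assms(4) by blast
    hence "L \<subseteq> image w h" using sp unfolding strip_pattern_set_def pattern_set_def by blast
    hence "0 \<le> x \<and> x < int w" using that(2) unfolding image_def by blast
    moreover have "\<bar>real (e L) / (real w - 1)\<bar> \<le> 1"
      using e_le[OF \<open>L \<in> \<L>\<close>] assms(2) by (simp add: of_nat_diff)
    moreover have "(real_of_int x, real_of_int y) \<in> strip (real (e L) / (real w - 1)) (b L) C"
      using strip[OF \<open>L \<in> \<L>\<close>] that(2) unfolding in_strip_def by blast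
    ultimately show ?thesis using vertical_offset_le_if_in_strip by blast
  qed
  have "finite \<R>"
    using finite_pattern_set sp assms(4) finite_subset unfolding strip_pattern_set_def by metis
  moreover have "\<R> \<noteq> {}" using False by blast
  moreover have "\<And>L. L \<in> \<R> \<Longrightarrow> e L \<le> w - 1" using e_le assms(4) by blast
  ultimately have I: "real (card (\<Inter>\<R>)) * real (card (e ` \<R>)) \<le> (8 * C + 1) * (2 * C + 1) * real w"
    using assms(1) by (intro card_Inter_mult_card_slopes_le[OF _ _ _ assms(2) _ band]) auto
  have "card \<R> \<le> Q * card (e ` \<R>)"
    by (rule card_le_density_mult_card_slopes[OF sp assms(4) _ e_le strip]) (use False in blast)
  hence "real (card \<R>) \<le> real Q * real (card (e ` \<R>))"
    by (metis of_nat_le_iff of_nat_mult)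
  hence "real (S_val \<R>) \<le> real Q * real (card (e ` \<R>)) * real (card (\<Inter>\<R>))"
    unfolding S_val_def of_nat_mult by (rule mult_right_mono) simp
  also have "\<dots> = real Q * (real (card (\<Inter>\<R>)) * real (card (e ` \<R>)))"
    by (simp only: ac_simps)
  also have "\<dots> \<le> real Q * ((8 * C + 1) * (2 * C + 1) * real w)"
    by (rule mult_left_mono[OF I]) simp
  finally show ?thesis by (simp only: mult.assoc)
qed

theorem lemma3:
  fixes C :: real and Q :: nat
  assumes "C > 0"
  shows "\<exists>C'>0. \<forall>w h \<L>. w \<ge> 2 \<longrightarrow> h \<ge> 1 \<longrightarrow> strip_pattern_set w h C Q \<L> \<longrightarrow>
            real (r_val \<L>) \<le> C' * real w"
proof (intro exI[of _ "real (Q + 1) * (8 * C + 1) * (2 * C + 1)"] conjI allI impI)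
  show "0 < real (Q + 1) * (8 * C + 1) * (2 * C + 1)" using assms by simp
  fix w h \<L> assume w: "w \<ge> 2" and "h \<ge> 1" and sp: "strip_pattern_set w h C Q \<L>"
  hence "finite \<L>" "\<L> \<noteq> {}"
    using finite_pattern_set unfolding strip_pattern_set_def pattern_set_def by blast+
  then obtain \<R> where "\<R> \<subseteq> \<L>" "r_val \<L> = S_val \<R>" by (rule r_val_attained)
  hence "real (r_val \<L>) \<le> real Q * (8 * C + 1) * (2 * C + 1) * real w"
    using S_val_le_strip_pattern_set[OF assms w sp] by simp
  also have "\<dots> \<le> real (Q + 1) * (8 * C + 1) * (2 * C + 1) * real w"
    using assms by (intro mult_right_mono) auto
  finally show "real (r_val \<L>) \<le> real (Q + 1) * (8 * C + 1) * (2 * C + 1) * real w" .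
qed

end
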